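(* For every $n\ge 1$, the $2$-structure $\mathscr{M}_n$ is terminating: for every discrete category $\mathscr{C}$, every infinite chain $t_1\xrightarrow{\alpha_1}t_2\xrightarrow{\alpha_2}t_3\to\cdots$ of morphisms in $\mathbb{F}_{\mathscr{C}}(\mathscr{M}_n)$ contains cofinitely many identity morphisms.
   Context: General framework: a $2$-structure $\langle\mathcal{F},\theta_{\mathcal{F}},\mathcal{T},\theta_{\mathcal{T}}\rangle$ consists of function symbols $\mathcal{F}$, term equations $\theta_{\mathcal{F}}$, labelled reduction rules $\mathcal{T}$ between congruence classes of terms, and equations $\theta_{\mathcal{T}}$ between reductions with equal source and target; over a category $\mathscr{C}$, reductions are generated from morphisms of $\mathscr{C}$ by function symbols, rule applications (with reductions substituted for the variables) and composition $\varphi\cdot\psi$ (diagrammatic order), and $\theta_{\mathcal{T}}$ always contains all instances of the identity, associativity, functoriality and naturality equations. $\mathbb{F}_{\mathscr{C}}(\mathcal{S})$ is the category whose objects are classes of terms over $\mathrm{Ob}(\mathscr{C})$ and whose morphisms are reductions modulo the congruence generated by $\theta_{\mathcal{T}}$. $\mathscr{M}_n$ (the $2$-structure for $n$-fold monoidal categories): binary function symbols $\otimes_1,\dots,\otimes_n$ and a nullary symbol $I$; term equations $A\otimes_i(B\otimes_iC)=(A\otimes_iB)\otimes_iC$, $A\otimes_iI=A$, $I\otimes_iA=A$ for $1\le i\le n$; for each $1\le i<j\le n$ a reduction rule (interchange) $\eta^{ij}_{A,B,C,D}:(A\otimes_jB)\otimes_i(C\otimes_jD)\to(A\otimes_iC)\otimes_j(B\otimes_iD)$;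 equations in $\theta_{\mathcal{T}}$ besides the mandatory ones: (internal unit) $\eta^{ij}_{A,B,I,I}=\eta^{ij}_{I,I,A,B}=1_{A\otimes_jB}$; (external unit) $\eta^{ij}_{A,I,B,I}=\eta^{ij}_{I,A,I,B}=1_{A\otimes_iB}$; (internal associativity) $(\eta^{ij}_{A,B,C,D}\otimes_i1_{E\otimes_jF})\cdot\eta^{ij}_{A\otimes_iC,B\otimes_iD,E,F}=(1_{A\otimes_jB}\otimes_i\eta^{ij}_{C,D,E,F})\cdot\eta^{ij}_{A,B,C\otimes_iE,D\otimes_iF}$; (external associativity) $\eta^{ij}_{A\otimes_jB,C,D\otimes_jE,F}\cdot(\eta^{ij}_{A,B,D,E}\otimes_j1_{C\otimes_iF})=\eta^{ij}_{A,B\otimes_jC,D,E\otimes_jF}\cdot(1_{A\otimes_iD}\otimes_j\eta^{ij}_{B,C,E,F})$; (giant hexagon) for $1\le i<j<k\le n$, as morphisms from $((A\otimes_kB)\otimes_j(C\otimes_kD))\otimes_i((E\otimes_kF)\otimes_j(G\otimes_kH))$ to $((A\otimes_iE)\otimes_j(C\otimes_iG))\otimes_k((B\otimes_iF)\otimes_j(D\otimes_iH))$: $(\eta^{jk}_{A,B,C,D}\otimes_i\eta^{jk}_{E,F,G,H})\cdot\eta^{ik}_{A\otimes_jC,B\otimes_jD,E\otimes_jG,F\otimes_jH}\cdot(\eta^{ij}_{A,C,E,G}\otimes_k\eta^{ij}_{B,D,F,H})=\eta^{ij}_{A\otimes_kB,C\otimes_kD,E\otimes_kF,G\otimes_kH}\cdot(\eta^{ik}_{A,B,E,F}\otimes_j\eta^{ik}_{C,D,G,H})\cdot\eta^{jk}_{A\otimes_iE,B\otimes_iF,C\otimes_iG,D\otimes_iH}$.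 *)

theory Defs
  imports Main
begin

text \<open>Terms of the 2-structure M_n over the objects of a discrete category
  (objects = elements of the type 'a).  Tens i is the i-th tensor, Unit is I.\<close>
datatype 'a trm = Var 'a | Unit | Tens nat "'a trm" "'a trm"

fun wft :: "nat \<Rightarrow> 'a trm \<Rightarrow> bool" where
  "wft n (Var a) = True"
| "wft n Unit = True"
| "wft n (Tens i s t) = (1 \<le> i \<and> i \<le> n \<and> wft n s \<and> wft n t)"

inductive teq :: "nat \<Rightarrow> 'a trm \<Rightarrow> 'a trm \<Rightarrow> bool" for n where
  teq_refl: "teq n t t"
| teq_sym: "teq n s t \<Longrightarrow> teq n t s"
| teq_trans: "teq n s t \<Longrightarrow> teq n t u \<Longrightarrow> teq n s u"
| teq_cong: "teq n s s' \<Longrightarrow> teq n t t' \<Longrightarrow> teq n (Tens i s t) (Tens i s' t')"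
| teq_assoc: "1 \<le> i \<Longrightarrow> i \<le> n \<Longrightarrow> teq n (Tens i a (Tens i b c)) (Tens i (Tens i a b) c)"
| teq_runit: "1 \<le> i \<Longrightarrow> i \<le> n \<Longrightarrow> teq n (Tens i a Unit) a"
| teq_lunit: "1 \<le> i \<Longrightarrow> i \<le> n \<Longrightarrow> teq n (Tens i Unit a) a"

text \<open>Reductions over a discrete category: RMor a is the (identity) morphism of
  the object a, RI the nullary function symbol, RTens i the i-th tensor,
  REta i j the interchange rule with reductions substituted for A,B,C,D,
  RComp f g the composition f then g (diagrammatic order).\<close>
datatype 'a red = RMor 'a | RI | RTens nat "'a red" "'a red"
  | REta nat nat "'a red" "'a red" "'a red" "'a red" | RComp "'a red" "'a red"

fun rsrc :: "'a red \<Rightarrow> 'a trm" where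
  "rsrc (RMor a) = Var a"
| "rsrc RI = Unit"
| "rsrc (RTens i f g) = Tens i (rsrc f) (rsrc g)"
| "rsrc (REta i j a b c d) = Tens i (Tens j (rsrc a) (rsrc b)) (Tens j (rsrc c) (rsrc d))"
| "rsrc (RComp f g) = rsrc f"

fun rtgt :: "'a red \<Rightarrow> 'a trm" where
  "rtgt (RMor a) = Var a"
| "rtgt RI = Unit"
| "rtgt (RTens i f g) = Tens i (rtgt f) (rtgt g)"
| "rtgt (REta i j a b c d) = Tens j (Tens i (rtgt a) (rtgt c)) (Tens i (rtgt b) (rtgt d))"
| "rtgt (RComp f g) = rtgt g"

fun wfr :: "nat \<Rightarrow> 'a red \<Rightarrow> bool" where
  "wfr n (RMor a) = True"
| "wfr n RI = True"
| "wfr n (RTens i f g) = (1 \<le> i \<and> i \<le> n \<and> wfr n f \<and> wfr n g)"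
| "wfr n (REta i j a b c d) = (1 \<le> i \<and> i < j \<and> j \<le> n \<and> wfr n a \<and> wfr n b \<and> wfr n c \<and> wfr n d)"
| "wfr n (RComp f g) = (wfr n f \<and> wfr n g \<and> teq n (rtgt f) (rsrc g))"

fun idr :: "'a trm \<Rightarrow> 'a red" where
  "idr (Var a) = RMor a"
| "idr Unit = RI"
| "idr (Tens i s t) = RTens i (idr s) (idr t)"

definition ET :: "nat \<Rightarrow> nat \<Rightarrow> 'a trm \<Rightarrow> 'a trm \<Rightarrow> 'a trm \<Rightarrow> 'a trm \<Rightarrow> 'a red" where
  "ET i j A B C D = REta i j (idr A) (idr B) (idr C) (idr D)"

text \<open>Congruence on well-formed reductions generated by theta_T of M_n
  (mandatory identity, associativity, functoriality, naturality equations,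
  the term equations lifted to reductions, and the specific equations of M_n).\<close>
inductive req :: "nat \<Rightarrow> 'a red \<Rightarrow> 'a red \<Rightarrow> bool" for n where
  req_refl: "wfr n f \<Longrightarrow> req n f f"
| req_sym: "req n f g \<Longrightarrow> req n g f"
| req_trans: "req n f g \<Longrightarrow> req n g h \<Longrightarrow> req n f h"
| req_tens: "req n f f' \<Longrightarrow> req n g g' \<Longrightarrow> wfr n (RTens i f g) \<Longrightarrow> wfr n (RTens i f' g')
    \<Longrightarrow> req n (RTens i f g) (RTens i f' g')"
| req_eta: "req n a a' \<Longrightarrow> req n b b' \<Longrightarrow> req n c c' \<Longrightarrow> req n d d'
    \<Longrightarrow> wfr n (REta i j a b c d) \<Longrightarrow> wfr n (REta i j a' b' c' d')
    \<Longrightarrow> req n (REta i j a b c d) (REta i j a' b' c' d')"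
| req_comp: "req n f f' \<Longrightarrow> req n g g' \<Longrightarrow> wfr n (RComp f g) \<Longrightarrow> wfr n (RComp f' g')
    \<Longrightarrow> req n (RComp f g) (RComp f' g')"
| req_tassoc: "wfr n (RTens i f (RTens i g h)) \<Longrightarrow>
    req n (RTens i f (RTens i g h)) (RTens i (RTens i f g) h)"
| req_trunit: "wfr n (RTens i f RI) \<Longrightarrow> req n (RTens i f RI) f"
| req_tlunit: "wfr n (RTens i RI f) \<Longrightarrow> req n (RTens i RI f) f"
| req_idl: "wfr n (RComp (idr u) f) \<Longrightarrow> wft n u \<Longrightarrow> req n (RComp (idr u) f) f"
| req_idr: "wfr n (RComp f (idr u)) \<Longrightarrow> wft n u \<Longrightarrow> req n (RComp f (idr u)) f"
| req_cassoc: "wfr n (RComp (RComp f g) h) \<Longrightarrow>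
    req n (RComp (RComp f g) h) (RComp f (RComp g h))"
| req_funct: "wfr n (RTens i (RComp f g) (RComp f' g')) \<Longrightarrow>
    req n (RTens i (RComp f g) (RComp f' g')) (RComp (RTens i f f') (RTens i g g'))"
| req_nat1: "wfr n (REta i j a b c d) \<Longrightarrow>
    req n (REta i j a b c d)
      (RComp (ET i j (rsrc a) (rsrc b) (rsrc c) (rsrc d))
             (RTens j (RTens i a c) (RTens i b d)))"
| req_nat2: "wfr n (REta i j a b c d) \<Longrightarrow>
    req n (REta i j a b c d)
      (RComp (RTens i (RTens j a b) (RTens j c d))
             (ET i j (rtgt a) (rtgt b) (rtgt c) (rtgt d)))"
| req_iunit1: "wfr n (ET i j A B Unit Unit) \<Longrightarrow> wft n A \<Longrightarrow> wft n B \<Longrightarrow>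
    req n (ET i j A B Unit Unit) (idr (Tens j A B))"
| req_iunit2: "wfr n (ET i j Unit Unit A B) \<Longrightarrow> wft n A \<Longrightarrow> wft n B \<Longrightarrow>
    req n (ET i j Unit Unit A B) (idr (Tens j A B))"
| req_eunit1: "wfr n (ET i j A Unit B Unit) \<Longrightarrow> wft n A \<Longrightarrow> wft n B \<Longrightarrow>
    req n (ET i j A Unit B Unit) (idr (Tens i A B))"
| req_eunit2: "wfr n (ET i j Unit A Unit B) \<Longrightarrow> wft n A \<Longrightarrow> wft n B \<Longrightarrow>
    req n (ET i j Unit A Unit B) (idr (Tens i A B))"
| req_iassoc: "wfr n (ET i j A B C D) \<Longrightarrow> wft n E \<Longrightarrow> wft n F \<Longrightarrow>
    req n (RComp (RTens i (ET i j A B C D) (idr (Tens j E F)))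
                 (ET i j (Tens i A C) (Tens i B D) E F))
          (RComp (RTens i (idr (Tens j A B)) (ET i j C D E F))
                 (ET i j A B (Tens i C E) (Tens i D F)))"
| req_eassoc: "wfr n (ET i j A B D E) \<Longrightarrow> wft n C \<Longrightarrow> wft n F \<Longrightarrow>
    req n (RComp (ET i j (Tens j A B) C (Tens j D E) F)
                 (RTens j (ET i j A B D E) (idr (Tens i C F))))
          (RComp (ET i j A (Tens j B C) D (Tens j E F))
                 (RTens j (idr (Tens i A D)) (ET i j B C E F)))"
| req_hex: "1 \<le> i \<Longrightarrow> i < j \<Longrightarrow> j < k \<Longrightarrow> k \<le> n \<Longrightarrow>
    wft n A \<Longrightarrow> wft n B \<Longrightarrow> wft n C \<Longrightarrow> wft n D \<Longrightarrow>
    wft n E \<Longrightarrow> wft n F \<Longrightarrow> wft n G \<Longrightarrow> wft n H \<Longrightarrow>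
    req n (RComp (RComp (RTens i (ET j k A B C D) (ET j k E F G H))
                        (ET i k (Tens j A C) (Tens j B D) (Tens j E G) (Tens j F H)))
                 (RTens k (ET i j A C E G) (ET i j B D F H)))
          (RComp (RComp (ET i j (Tens k A B) (Tens k C D) (Tens k E F) (Tens k G H))
                        (RTens j (ET i k A B E F) (ET i k C D G H)))
                 (ET j k (Tens i A E) (Tens i B F) (Tens i C G) (Tens i D H)))"

end

theory Submission
  imports Defs
begin

text \<open>The weight of a term is the sum, over all pairs of variable occurrences, of the
  index of the tensor at which the two occurrences meet. The term equations preserve the
  number of variables and the weight. An interchange \<open>\<eta>\<^sup>i\<^sup>j\<close> with arguments \<open>A, B, C, D\<close>
  moves the pairs between \<open>A\<close> and \<open>D\<close> and between \<open>B\<close> and \<open>C\<close> from \<open>\<otimes>\<^sub>i\<close> to \<open>\<otimes>\<^sub>j\<close> and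
  leaves all other pairs where they are, so reductions never decrease the weight, which is
  bounded by \<open>n\<close> times the square of the number of variables. Along an infinite chain the
  weight therefore becomes constant. A reduction that preserves the weight only uses
  interchanges in which one of \<open>A, D\<close> and one of \<open>B, C\<close> contain no variables, i.e. are
  congruent to \<open>I\<close>; by the unit equations these interchanges are identities, hence so is
  the whole reduction.\<close>

fun var_count :: "'a trm \<Rightarrow> nat" where
  "var_count (Var a) = 1"
| "var_count Unit = 0"
| "var_count (Tens i s t) = var_count s + var_count t"

fun weight :: "'a trm \<Rightarrow> nat" where
  "weight (Var a) = 0"
| "weight Unit = 0"
| "weight (Tens i s t) = weight s + weight t + i * var_count s * var_count t"

lemma teq_var_count: "teq n s t \<Longrightarrow> var_count s = var_count t"
  by (induction rule: teq.induct) auto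

lemma teq_weight: "teq n s t \<Longrightarrow> weight s = weight t"
  by (induction rule: teq.induct) (auto simp: teq_var_count algebra_simps)

lemma teq_wft: "teq n s t \<Longrightarrow> wft n s = wft n t"
  by (induction rule: teq.induct) auto

lemma weight_le: "wft n s \<Longrightarrow> weight s \<le> n * var_count s ^ 2"
proof (induction s)
  case (Tens i s t)
  then have "weight (Tens i s t) \<le> n * var_count s ^ 2 + n * var_count t ^ 2
      + n * var_count s * var_count t"
    by (auto intro!: add_mono mult_right_mono)
  also have "\<dots> \<le> n * (var_count s + var_count t) ^ 2"
    by (simp add: power2_eq_square algebra_simps)
  finally show ?case by simp
qed auto

lemma teq_cong_left: "teq n s s' \<Longrightarrow> teq n (Tens i s t) (Tens i s' t)"
  by (simp add: teq_cong teq_refl)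

lemma teq_cong_right: "teq n t t' \<Longrightarrow> teq n (Tens i s t) (Tens i s t')"
  by (simp add: teq_cong teq_refl)

lemma teq_assoc_sym: "1 \<le> i \<Longrightarrow> i \<le> n \<Longrightarrow> teq n (Tens i (Tens i a b) c) (Tens i a (Tens i b c))"
  by (simp add: teq_assoc teq_sym)

lemma teq_Tens_Unit_left: "teq n s Unit \<Longrightarrow> 1 \<le> i \<Longrightarrow> i \<le> n \<Longrightarrow> teq n (Tens i s t) t"
  by (meson teq_cong_left teq_lunit teq_trans)

lemma teq_Tens_Unit_right: "teq n t Unit \<Longrightarrow> 1 \<le> i \<Longrightarrow> i \<le> n \<Longrightarrow> teq n (Tens i s t) s"
  by (meson teq_cong_right teq_runit teq_trans)

lemma teq_Tens_Unit_Unit: "1 \<le> i \<Longrightarrow> i \<le> n \<Longrightarrow> teq n (Tens i Unit Unit) Unit"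
  by (simp add: teq_runit)

lemma teq_Unit_if_var_count_eq_0: "wft n s \<Longrightarrow> var_count s = 0 \<Longrightarrow> teq n s Unit"
proof (induction s)
  case (Tens i s t)
  then have "teq n (Tens i s t) t" and "teq n t Unit"
    by (simp_all add: teq_Tens_Unit_left)
  then show ?case by (rule teq_trans)
qed (auto intro: teq_refl)

lemma rsrc_idr [simp]: "rsrc (idr t) = t"
  and rtgt_idr [simp]: "rtgt (idr t) = t"
  by (induction t) auto

lemma wfr_idr_iff [simp]: "wfr n (idr t) = wft n t"
  by (induction t) auto

lemma wfr_ET_iff [simp]:
  "wfr n (ET i j A B C D) = (1 \<le> i \<and> i < j \<and> j \<le> n \<and> wft n A \<and> wft n B \<and> wft n C \<and> wft n D)"
  by (simp add: ET_def)

lemma wft_rsrc: "wfr n f \<Longrightarrow> wft n (rsrc f)"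
  and wft_rtgt: "wfr n f \<Longrightarrow> wft n (rtgt f)"
  by (induction f) (auto dest: teq_wft)

lemmas req_trans_rule [trans] = req_trans

lemma req_idr_teq: "teq n s t \<Longrightarrow> wft n s \<Longrightarrow> req n (idr s) (idr t)"
proof (induction rule: teq.induct)
  case (teq_cong s s' t t' i)
  then have "wft n s'" "wft n t'" by (auto simp: teq_wft)
  with teq_cong show ?case by (auto intro!: req_tens)
qed (auto intro: req_refl req_sym req_trans req_tassoc req_trunit req_tlunit simp: teq_wft)

lemma req_teq_rsrc_rtgt: "req n f g \<Longrightarrow> teq n (rsrc f) (rsrc g) \<and> teq n (rtgt f) (rtgt g)"
proof (induction rule: req.induct)
  case (req_iunit1 i j A B)
  then show ?case
    by (auto simp: ET_def intro!: teq_Tens_Unit_right teq_Tens_Unit_Unit teq_cong teq_runit)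
next
  case (req_iunit2 i j A B)
  then show ?case
    by (auto simp: ET_def intro!: teq_Tens_Unit_left teq_Tens_Unit_Unit teq_cong teq_lunit)
next
  case (req_eunit1 i j A B)
  then show ?case
    by (auto simp: ET_def intro!: teq_Tens_Unit_right teq_Tens_Unit_Unit teq_cong teq_runit)
next
  case (req_eunit2 i j A B)
  then show ?case
    by (auto simp: ET_def intro!: teq_Tens_Unit_left teq_Tens_Unit_Unit teq_cong teq_lunit)
next
  case (req_iassoc i j A B C D E F)
  then show ?case by (auto simp: ET_def intro!: teq_cong teq_assoc_sym)
next
  case (req_eassoc i j A B D E C F)
  then show ?case by (auto simp: ET_def intro!: teq_cong teq_assoc_sym)
qed (auto simp: ET_def intro: teq.intros)

lemma wfr_var_count: "wfr n f \<Longrightarrow> var_count (rsrc f) = var_count (rtgt f)"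
  by (induction f) (auto dest: teq_var_count)

lemma weight_REta:
  assumes "wfr n (REta i j a b c d)"
  defines "K \<equiv> var_count (rsrc a) * var_count (rsrc d) + var_count (rsrc b) * var_count (rsrc c)"
  shows "weight (rtgt (REta i j a b c d))
      + weight (rsrc a) + weight (rsrc b) + weight (rsrc c) + weight (rsrc d) + i * K
    = weight (rsrc (REta i j a b c d))
      + weight (rtgt a) + weight (rtgt b) + weight (rtgt c) + weight (rtgt d) + j * K"
proof -
  have "var_count (rtgt x) = var_count (rsrc x)" if "x \<in> {a, b, c, d}" for x
    using assms(1) that by (auto simp: wfr_var_count)
  then show ?thesis by (simp add: K_def algebra_simps)
qed

lemma wfr_weight_le: "wfr n f \<Longrightarrow> weight (rsrc f) \<le> weight (rtgt f)"
proof (induction f)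
  case (RTens i f g)
  then show ?case by (auto simp: wfr_var_count)
next
  case (REta i j a b c d)
  let ?K = "var_count (rsrc a) * var_count (rsrc d) + var_count (rsrc b) * var_count (rsrc c)"
  from REta have "weight (rsrc a) \<le> weight (rtgt a)" "weight (rsrc b) \<le> weight (rtgt b)"
    "weight (rsrc c) \<le> weight (rtgt c)" "weight (rsrc d) \<le> weight (rtgt d)"
    and "i * ?K \<le> j * ?K"
    by auto
  with weight_REta[OF REta.prems] show ?case by linarith
next
  case (RComp f g)
  then show ?case by (auto dest: teq_weight)
qed auto

lemma req_ET_teq:
  assumes "1 \<le> i" "i < j" "j \<le> n"
    and "wft n A" "wft n B" "wft n C" "wft n D"
    and "teq n A A'" "teq n B B'" "teq n C C'" "teq n D D'"
  shows "req n (ET i j A B C D) (ET i j A' B' C' D')"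
proof -
  have "wft n A'" "wft n B'" "wft n C'" "wft n D'" using assms by (auto simp: teq_wft)
  with assms show ?thesis
    unfolding ET_def by (intro req_eta) (auto simp: req_idr_teq)
qed

lemma req_ET_idr_if_teq:
  assumes "req n (ET i j A' B' C' D') (idr T)"
    and "1 \<le> i" "i < j" "j \<le> n"
    and "wft n A" "wft n B" "wft n C" "wft n D"
    and "teq n A A'" "teq n B B'" "teq n C C'" "teq n D D'"
  shows "req n (ET i j A B C D) (idr (Tens i (Tens j A B) (Tens j C D)))"
proof -
  let ?S = "Tens i (Tens j A B) (Tens j C D)"
  have "teq n ?S (Tens i (Tens j A' B') (Tens j C' D'))"
    using assms by (intro teq_cong) auto
  moreover have "teq n (Tens i (Tens j A' B') (Tens j C' D')) T"
    using req_teq_rsrc_rtgt[OF assms(1)] by (simp add: ET_def)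
  ultimately have "teq n T ?S" by (meson teq_sym teq_trans)
  moreover have "wft n ?S" using assms by simp
  ultimately have "req n (idr T) (idr ?S)"
    by (meson req_idr_teq teq_sym teq_wft)
  moreover have "req n (ET i j A B C D) (ET i j A' B' C' D')"
    using assms by (intro req_ET_teq) auto
  ultimately show ?thesis using assms(1) by (meson req_trans)
qed

lemma req_ET_degenerate:
  assumes ij: "1 \<le> i" "i < j" "j \<le> n"
    and wft: "wft n A" "wft n B" "wft n C" "wft n D"
    and AD: "var_count A = 0 \<or> var_count D = 0"
    and BC: "var_count B = 0 \<or> var_count C = 0"
  shows "req n (ET i j A B C D) (idr (Tens i (Tens j A B) (Tens j C D)))"
proof -
  have wfr_ET: "wfr n (ET i j A' B' C' D')"
    if "wft n A'" "wft n B'" "wft n C'" "wft n D'" for A' B' C' D' :: "'a trm"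
    using ij that by simp
  note units = teq_Unit_if_var_count_eq_0[OF wft(1)] teq_Unit_if_var_count_eq_0[OF wft(2)]
    teq_Unit_if_var_count_eq_0[OF wft(3)] teq_Unit_if_var_count_eq_0[OF wft(4)]
  from AD BC consider "var_count A = 0" "var_count B = 0" | "var_count A = 0" "var_count C = 0"
    | "var_count D = 0" "var_count B = 0" | "var_count D = 0" "var_count C = 0"
    by argo
  then show ?thesis
  proof cases
    case 1
    with ij wft units show ?thesis
      by (intro req_ET_idr_if_teq[OF req_iunit2[where A = C and B = D, OF wfr_ET]])
        (auto intro: teq_refl)
  next
    case 2
    with ij wft units show ?thesis
      by (intro req_ET_idr_if_teq[OF req_eunit2[where A = B and B = D, OF wfr_ET]])
        (auto intro: teq_refl)
  next
    case 3
    with ij wft units show ?thesis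
      by (intro req_ET_idr_if_teq[OF req_eunit1[where A = A and B = C, OF wfr_ET]])
        (auto intro: teq_refl)
  next
    case 4
    with ij wft units show ?thesis
      by (intro req_ET_idr_if_teq[OF req_iunit1[where A = A and B = B, OF wfr_ET]])
        (auto intro: teq_refl)
  qed
qed

lemma req_idr_if_weight_eq:
  "wfr n f \<Longrightarrow> weight (rsrc f) = weight (rtgt f) \<Longrightarrow> req n f (idr (rsrc f))"
proof (induction f)
  case (RTens i f g)
  then have "weight (rsrc f) = weight (rtgt f)" "weight (rsrc g) = weight (rtgt g)"
    using wfr_weight_le[of n f] wfr_weight_le[of n g] by (auto simp: wfr_var_count)
  with RTens show ?case by (auto intro!: req_tens simp: wft_rsrc)
next
  case (RComp f g)
  then have fg: "wfr n f" "wfr n g" "teq n (rtgt f) (rsrc g)" by auto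
  then have "weight (rsrc f) = weight (rtgt f)" "weight (rsrc g) = weight (rtgt g)"
    using RComp.prems wfr_weight_le[of n f] wfr_weight_le[of n g] teq_weight by fastforce+
  with RComp fg have f: "req n f (idr (rsrc f))" and g: "req n g (idr (rsrc g))" by auto
  have "teq n (rtgt f) (rsrc f)" using req_teq_rsrc_rtgt[OF f] by simp
  with fg have fg_src: "teq n (rsrc f) (rsrc g)" by (meson teq_sym teq_trans)
  have wft: "wft n (rsrc f)" "wft n (rsrc g)" using fg by (auto simp: wft_rsrc)
  have "req n (RComp f g) (RComp (idr (rsrc f)) (idr (rsrc g)))"
    using f g fg_src wft RComp.prems by (intro req_comp) auto
  also have "req n \<dots> (idr (rsrc g))"
    using wft fg_src by (intro req_idl) auto
  also have "req n \<dots> (idr (rsrc f))"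
    using wft fg_src by (simp add: req_idr_teq teq_sym)
  finally show ?case by simp
next
  case (REta i j a b c d)
  let ?K = "var_count (rsrc a) * var_count (rsrc d) + var_count (rsrc b) * var_count (rsrc c)"
  from REta.prems have "weight (rsrc a) \<le> weight (rtgt a)" "weight (rsrc b) \<le> weight (rtgt b)"
    "weight (rsrc c) \<le> weight (rtgt c)" "weight (rsrc d) \<le> weight (rtgt d)"
    and "i * ?K \<le> j * ?K"
    by (auto simp: wfr_weight_le)
  with weight_REta[OF REta.prems(1)] REta.prems(2)
  have eq: "weight (rsrc a) = weight (rtgt a)" "weight (rsrc b) = weight (rtgt b)"
    "weight (rsrc c) = weight (rtgt c)" "weight (rsrc d) = weight (rtgt d)"
    and "i * ?K = j * ?K"
    by linarith+
  then have K: "?K = 0" using REta.prems by simp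
  from eq REta have ih: "req n a (idr (rsrc a))" "req n b (idr (rsrc b))"
    "req n c (idr (rsrc c))" "req n d (idr (rsrc d))"
    by auto
  have "req n (REta i j a b c d) (ET i j (rsrc a) (rsrc b) (rsrc c) (rsrc d))"
    unfolding ET_def using REta.prems ih by (intro req_eta) (auto simp: wft_rsrc)
  also have "req n \<dots> (idr (rsrc (REta i j a b c d)))"
    unfolding rsrc.simps using REta.prems K
    by (intro req_ET_degenerate) (auto simp: wft_rsrc)
  finally show ?case .
qed (auto intro: req_refl)

lemma bounded_incseq_nat_eventually_const:
  fixes f :: "nat \<Rightarrow> nat"
  assumes "\<And>k. f k \<le> f (Suc k)" and "\<And>k. f k \<le> B"
  shows "\<exists>N. \<forall>k\<ge>N. f (Suc k) = f k"
proof -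
  have "finite (range f)"
    using assms(2) by (meson finite_atMost finite_subset image_subsetI atMost_iff)
  then have "Max (range f) \<in> range f" and max: "\<And>k. f k \<le> Max (range f)"
    by auto
  then obtain N where "f N = Max (range f)" by auto
  moreover have "f N \<le> f k" if "N \<le> k" for k
    using assms(1) that by (rule lift_Suc_mono_le)
  ultimately show ?thesis
    using max by (metis le_SucI le_antisym)
qed

theorem proposition5p4:
  fixes n :: nat and t :: "nat \<Rightarrow> 'a trm" and \<alpha> :: "nat \<Rightarrow> 'a red"
  assumes "n \<ge> 1"
    and "\<And>k. wft n (t k)"
    and "\<And>k. wfr n (\<alpha> k)"
    and "\<And>k. teq n (rsrc (\<alpha> k)) (t k)"
    and "\<And>k. teq n (rtgt (\<alpha> k)) (t (Suc k))"
  shows "\<exists>N. \<forall>k\<ge>N. req n (\<alpha> k) (idr (t k))"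
proof -
  have var_count_step: "var_count (t (Suc k)) = var_count (t k)"
   and weight_step: "weight (t k) \<le> weight (t (Suc k))" for k
    using wfr_var_count[OF assms(3)] wfr_weight_le[OF assms(3)]
      teq_var_count[OF assms(4)] teq_var_count[OF assms(5)]
      teq_weight[OF assms(4)] teq_weight[OF assms(5)]
    by (metis, metis)
  have var_count_const: "var_count (t k) = var_count (t 0)" for k
    by (induction k) (simp_all add: var_count_step)
  have "weight (t k) \<le> n * var_count (t 0) ^ 2" for k
    using weight_le[OF assms(2), of k] var_count_const[of k] by simp
  with weight_step obtain N where "\<And>k. k \<ge> N \<Longrightarrow> weight (t (Suc k)) = weight (t k)"
    using bounded_incseq_nat_eventually_const[of "\<lambda>k. weight (t k)"] by blast
  then have "req n (\<alpha> k) (idr (rsrc (\<alpha> k)))" if "k \<ge> N" for k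
    using that req_idr_if_weight_eq[OF assms(3)] teq_weight[OF assms(4)] teq_weight[OF assms(5)]
    by metis
  moreover have "req n (idr (rsrc (\<alpha> k))) (idr (t k))" for k
    using assms(3,4) by (simp add: req_idr_teq wft_rsrc)
  ultimately show ?thesis by (meson req_trans)
qed

end
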